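(* Let $P:=\mathrm{conv}\{\rho_0,\rho_1,\ldots,\rho_n\}\subset N_\mathbb{R}$ be an $n$-simplex such that $\sum_{i=0}^n\lambda_i\rho_i=0$ for some $\lambda_0,\ldots,\lambda_n\in\mathbb{Z}_{>0}$. Let $h:=\sum_{i=0}^n\lambda_i$ and $k:=|N\cap P^\circ|$, where $P^\circ$ is the interior of $P$. Then $$\mathrm{vol}\,P\leq\frac{k\,h^n}{n!\,\lambda_1\lambda_2\cdots\lambda_n}.$$
   Context: $N\cong\mathbb{Z}^n$ is a lattice and $N_\mathbb{R}:=N\otimes_\mathbb{Z}\mathbb{R}$. Volume is taken relative to the lattice $N$, i.e. normalised so that a fundamental parallelepiped of $N$ has volume $1$. *)

theory Defs
  imports "HOL-Analysis.Analysis"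
begin

end

theory Submission
  imports Defs
begin

(* Write P = conv{rho_0, ..., rho_n} as the image of the standard simplex Delta under the
   affine map F s = rho_0 + M s, where the columns of M are the edges rho_i - rho_0.  The
   relation sum lambda_i rho_i = 0 says that F maps the point b, b_i = lambda_i / h
   (i = 1..n), to the origin; b lies in the interior of Delta.  For the box (0,b), any two
   points F s, F s' with sum s <= sum s' have difference F(b + s - s') in the interior of
   P.  Hence every translate of Z^n meets F(0,b) in at most k lattice points, and
   Blichfeldt's principle gives vol F(0,b) <= k.  Since F scales all volumes by the same
   factor, vol P = vol F(0,b) / (n! b_1 ... b_n), which is the claim. *)

lemma linear_image_translation:
  fixes f :: "'a::real_vector \<Rightarrow> 'b::real_vector"
  assumes "linear f"
  shows "f ` ((+) v ` X) = (+) (f v) ` (f ` X)"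
  using linear_add[OF assms] by (auto simp: image_iff)

(* A linear map preserving the volume of every box anchored at the origin preserves
   all volumes; translation invariance reduces arbitrary boxes to anchored ones. *)
lemma measure_preserving_linear_from_boxes:
  fixes f :: "real^'n \<Rightarrow> real^'n"
  assumes lin: "linear f"
    and box: "\<And>b. (\<forall>j. 0 \<le> b$j) \<Longrightarrow> measure lebesgue (f ` cbox 0 b) = measure lebesgue (cbox 0 b)"
    and S: "S \<in> lmeasurable"
  shows "f ` S \<in> lmeasurable \<and> measure lebesgue (f ` S) = measure lebesgue S"
proof -
  have "measure lebesgue (f ` cbox a b) = 1 * measure lebesgue (cbox a b)" for a b
  proof (cases "cbox a b = {}")
    case True
    then show ?thesis by simp
  next
    case False
    then have nonneg: "\<forall>j. 0 \<le> (b - a)$j"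
      by (auto simp: mem_box_cart) (meson order_trans)
    have "cbox a b = (+) a ` cbox 0 (b - a)"
      using cbox_translation[of a 0 "b - a"] by simp
    then have "measure lebesgue (f ` cbox a b) = measure lebesgue (f ` cbox 0 (b - a))"
      by (simp add: linear_image_translation[OF lin] measure_translation)
    also have "\<dots> = measure lebesgue (cbox a b)"
      using box[OF nonneg] \<open>cbox a b = _\<close> by (simp add: measure_translation)
    finally show ?thesis by simp
  qed
  from measure_linear_sufficient[OF lin S this] show ?thesis
    by simp
qed

lemma measure_cbox_cart:
  fixes a b :: "real^'n"
  assumes "\<And>j. a$j \<le> b$j"
  shows "measure lebesgue (cbox a b) = (\<Prod>j\<in>UNIV. b$j - a$j)"
proof -
  have "a \<in> cbox a b"
    using assms by (simp add: mem_box_cart)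
  then have "measure lborel (cbox a b) = (\<Prod>j\<in>UNIV. b$j - a$j)"
    using content_cbox_cart[of a b] by blast
  then show ?thesis
    by simp
qed

lemma measure_swap_box:
  fixes b :: "real^'n"
  assumes "\<forall>j. 0 \<le> b$j"
  shows "measure lebesgue ((\<lambda>x. \<chi> i. x $ Transposition.transpose m n i) ` cbox 0 b)
       = measure lebesgue (cbox 0 b)"
proof -
  let ?t = "Transposition.transpose m n"
  let ?f = "\<lambda>x::real^'n. \<chi> i. x $ ?t i"
  have "?f ` cbox 0 b = cbox 0 (?f b)"
  proof
    show "?f ` cbox 0 b \<subseteq> cbox 0 (?f b)"
      by (auto simp: mem_box_cart)
    show "cbox 0 (?f b) \<subseteq> ?f ` cbox 0 b"
    proof
      fix y :: "real^'n"
      assume "y \<in> cbox 0 (?f b)"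
      then have "?f y \<in> cbox 0 b"
        by (simp add: mem_box_cart) (metis transpose_involutory)
      moreover have "y = ?f (?f y)"
        by (simp add: vec_eq_iff)
      ultimately show "y \<in> ?f ` cbox 0 b"
        by blast
    qed
  qed
  moreover have "(\<Prod>j\<in>UNIV. b $ ?t j) = (\<Prod>j\<in>UNIV. b $ j)"
    using prod.permute[OF permutes_swap_id[of m UNIV n], of "\<lambda>j. b $ j"] by (simp add: comp_def)
  moreover have "measure lebesgue (cbox 0 (?f b)) = (\<Prod>j\<in>UNIV. b $ ?t j)"
    using assms by (subst measure_cbox_cart) auto
  moreover have "measure lebesgue (cbox 0 b) = (\<Prod>j\<in>UNIV. b $ j)"
    using assms by (subst measure_cbox_cart) auto
  ultimately show ?thesis
    by simp
qed

lemma measure_shear_box: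
  fixes b :: "real^'n"
  assumes "m \<noteq> n" and "\<forall>j. 0 \<le> b$j"
  shows "measure lebesgue ((\<lambda>x. \<chi> i. if i = m then x$m + x$n else x$i) ` cbox 0 b)
       = measure lebesgue (cbox 0 b)"
proof (rule measure_shear_interval[OF \<open>m \<noteq> n\<close>])
  have "0 \<in> cbox 0 b"
    using assms by (simp add: mem_box_cart)
  then show "cbox 0 b \<noteq> {}"
    by blast
qed simp

(* Every linear map of R^n scales Lebesgue measure by a constant factor.  (The
   library's measure_linear_image identifies the factor as |det| but requires a
   wellordered index type; only the existence of the factor is needed here.)  The
   proof decomposes the map into elementary ones. *)
lemma linear_image_measure_scaling:
  fixes f :: "real^'n \<Rightarrow> real^'n"
  assumes "linear f"
  shows "\<exists>c. \<forall>S \<in> lmeasurable. f ` S \<in> lmeasurable \<and> measure lebesgue (f ` S) = c * measure lebesgue S"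
proof (rule induct_linear_elementary[OF assms])
  fix f g :: "real^'n \<Rightarrow> real^'n"
  assume "\<exists>c. \<forall>S \<in> lmeasurable. f ` S \<in> lmeasurable \<and> measure lebesgue (f ` S) = c * measure lebesgue S"
    and "\<exists>c. \<forall>S \<in> lmeasurable. g ` S \<in> lmeasurable \<and> measure lebesgue (g ` S) = c * measure lebesgue S"
  then obtain c d where
    f: "\<And>S. S \<in> lmeasurable \<Longrightarrow> f ` S \<in> lmeasurable \<and> measure lebesgue (f ` S) = c * measure lebesgue S" and
    g: "\<And>S. S \<in> lmeasurable \<Longrightarrow> g ` S \<in> lmeasurable \<and> measure lebesgue (g ` S) = d * measure lebesgue S"
    by blast
  have "(f \<circ> g) ` S \<in> lmeasurable \<and> measure lebesgue ((f \<circ> g) ` S) = (c * d) * measure lebesgue S"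
    if "S \<in> lmeasurable" for S
    using f[of "g ` S"] g[OF that] by (simp add: image_image mult.assoc)
  then show "\<exists>c. \<forall>S \<in> lmeasurable. (f \<circ> g) ` S \<in> lmeasurable \<and> measure lebesgue ((f \<circ> g) ` S) = c * measure lebesgue S"
    by blast
next
  fix f :: "real^'n \<Rightarrow> real^'n" and i
  assume "linear f" and "\<And>x. f x $ i = 0"
  then have "\<not> inj f"
    by (metis linear_injective_imp_surjective one_neq_zero surjE vec_component)
  then have "negligible (f ` S)" for S
    using negligible_linear_singular_image[OF \<open>linear f\<close>] by blast
  then show "\<exists>c. \<forall>S \<in> lmeasurable. f ` S \<in> lmeasurable \<and> measure lebesgue (f ` S) = c * measure lebesgue S"
    by (intro exI[of _ 0]) (simp add: negligible_iff_measure)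
next
  fix c :: "'n \<Rightarrow> real"
  show "\<exists>d. \<forall>S \<in> lmeasurable. (\<lambda>x. \<chi> i. c i * x$i) ` S \<in> lmeasurable
          \<and> measure lebesgue ((\<lambda>x. \<chi> i. c i * x$i) ` S) = d * measure lebesgue S"
    by (intro exI[of _ "\<bar>prod c UNIV\<bar>"]) (simp add: measurable_stretch measure_stretch)
next
  fix m n :: 'n
  let ?f = "\<lambda>x::real^'n. \<chi> i. x $ Transposition.transpose m n i"
  have "linear ?f"
    by (rule linearI) (simp_all add: plus_vec_def scaleR_vec_def)
  from measure_preserving_linear_from_boxes[OF this measure_swap_box]
  show "\<exists>c. \<forall>S \<in> lmeasurable. ?f ` S \<in> lmeasurable \<and> measure lebesgue (?f ` S) = c * measure lebesgue S"
    by (intro exI[of _ 1]) simp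
next
  fix m n :: 'n
  assume "m \<noteq> n"
  let ?f = "\<lambda>x::real^'n. \<chi> i. if i = m then x$m + x$n else x$i"
  have "linear ?f"
    by (rule linearI) (auto simp: plus_vec_def scaleR_vec_def algebra_simps)
  from measure_preserving_linear_from_boxes[OF this measure_shear_box[OF \<open>m \<noteq> n\<close>]]
  show "\<exists>c. \<forall>S \<in> lmeasurable. ?f ` S \<in> lmeasurable \<and> measure lebesgue (?f ` S) = c * measure lebesgue S"
    by (intro exI[of _ 1]) simp
qed

definition integer_lattice :: "(real^'n) set" where
  "integer_lattice = {x. \<forall>j. x$j \<in> \<int>}"

lemma integer_lattice_diff:
  "x \<in> integer_lattice \<Longrightarrow> y \<in> integer_lattice \<Longrightarrow> x - y \<in> integer_lattice"
  by (simp add: integer_lattice_def Ints_diff)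

lemma finite_lattice_points:
  fixes S :: "(real^'n) set"
  assumes "bounded S"
  shows "finite (S \<inter> integer_lattice)"
proof -
  obtain B where B: "\<And>x. x \<in> S \<Longrightarrow> norm x \<le> B"
    using assms bounded_iff by blast
  define K where "K = {k \<in> \<int>. \<bar>k\<bar> \<le> B}"
  have "S \<inter> integer_lattice \<subseteq> vec_lambda ` (UNIV \<rightarrow>\<^sub>E K)"
  proof
    fix x assume x: "x \<in> S \<inter> integer_lattice"
    have "\<bar>x$j\<bar> \<le> B" for j
      using component_le_norm_cart[of x j] B x by force
    then have "(\<lambda>j. x$j) \<in> UNIV \<rightarrow>\<^sub>E K"
      using x by (simp add: K_def integer_lattice_def PiE_iff)
    then show "x \<in> vec_lambda ` (UNIV \<rightarrow>\<^sub>E K)"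
      by (rule rev_image_eqI) simp
  qed
  moreover have "finite K"
    unfolding K_def by (rule finite_abs_int_segment)
  then have "finite (vec_lambda ` (UNIV \<rightarrow>\<^sub>E K))"
    by (intro finite_imageI finite_PiE) simp_all
  ultimately show ?thesis
    by (rule finite_subset)
qed

lemma finite_translated_lattice_points:
  fixes S :: "(real^'n) set"
  assumes "bounded S"
  shows "finite (S \<inter> (+) y ` integer_lattice)"
proof -
  have shift: "S \<inter> (+) y ` integer_lattice = (+) y ` ((+) (-y) ` S \<inter> integer_lattice)"
    by (force simp: image_iff)
  have "finite ((+) (-y) ` S \<inter> integer_lattice)"
    using assms by (intro finite_lattice_points bounded_translation)
  then show ?thesis
    unfolding shift by (rule finite_imageI)
qed

lemma lattice_floor_decomposition:
  fixes x :: "real^'n"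
  obtains z where "z \<in> integer_lattice" "x - z \<in> cbox 0 1" "norm z \<le> norm x + real CARD('n)"
proof
  define z :: "real^'n" where "z = (\<chi> j. of_int \<lfloor>x$j\<rfloor>)"
  show "z \<in> integer_lattice"
    by (simp add: z_def integer_lattice_def)
  show "x - z \<in> cbox 0 1"
    unfolding z_def by (auto simp: mem_box_cart) linarith+
  have "norm (x - z) \<le> (\<Sum>j\<in>UNIV. \<bar>(x - z)$j\<bar>)"
    by (rule norm_le_l1_cart)
  also have "\<dots> \<le> real CARD('n)"
    using sum_mono[of UNIV "\<lambda>j. \<bar>(x - z)$j\<bar>" "\<lambda>_. 1"] by (simp add: z_def) linarith
  finally show "norm z \<le> norm x + real CARD('n)"
    using norm_triangle_ineq4[of x "x - z"] by simp
qed

lemma card_lattice_translate_hits: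
  fixes Q :: "(real^'n) set"
  assumes "finite Z" "bounded Q" "Z \<subseteq> integer_lattice"
  shows "card {z \<in> Z. y + z \<in> Q} \<le> card (Q \<inter> (+) y ` integer_lattice)"
proof (rule card_inj_on_le)
  show "inj_on ((+) y) {z \<in> Z. y + z \<in> Q}"
    by simp
  show "(+) y ` {z \<in> Z. y + z \<in> Q} \<subseteq> Q \<inter> (+) y ` integer_lattice"
    using assms(3) by auto
  show "finite (Q \<inter> (+) y ` integer_lattice)"
    using assms(2) by (rule finite_translated_lattice_points)
qed

lemma measure_unit_cube: "measure lebesgue (cbox (0::real^'n) 1) = 1"
  by (subst measure_cbox_cart) auto

(* Cutting Q along the unit cubes of the lattice and translating the
   pieces into [0,1]^n, every point of the cube is covered at most k times. *)
lemma blichfeldt: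
  fixes Q :: "(real^'n) set"
  assumes Qm: "Q \<in> lmeasurable" and Qb: "bounded Q"
    and count: "\<And>y. card (Q \<inter> (+) y ` integer_lattice) \<le> k"
  shows "measure lebesgue Q \<le> real k"
proof -
  obtain R where R: "\<And>x. x \<in> Q \<Longrightarrow> norm x \<le> R"
    using Qb bounded_iff by blast
  define Z :: "(real^'n) set" where "Z = cball 0 (R + real CARD('n)) \<inter> integer_lattice"
  have finZ: "finite Z"
    unfolding Z_def by (rule finite_lattice_points) simp
  define C where "C = cbox (0::real^'n) 1"
  define A where "A z = {y \<in> C. y + z \<in> Q}" for z
  have A_eq: "A z = (+) (-z) ` Q \<inter> C" for z
    by (force simp: A_def image_iff)
  have A_meas: "A z \<in> lmeasurable" for z
    unfolding A_eq C_def by (intro fmeasurable_Int_fmeasurable measurable_translation Qm) simp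
  have A_int: "integrable lebesgue (indicator (A z) :: _ \<Rightarrow> real)" for z
    using A_meas[of z] by (auto simp: fmeasurable_def intro!: integrable_real_indicator)
  have shifted_meas: "(+) z ` A z \<in> lmeasurable" for z
    using A_meas by (rule measurable_translation)
  have cover: "Q \<subseteq> (\<Union>z\<in>Z. (+) z ` A z)"
  proof
    fix x assume x: "x \<in> Q"
    obtain z where z: "z \<in> integer_lattice" "x - z \<in> C" "norm z \<le> norm x + real CARD('n)"
      using lattice_floor_decomposition unfolding C_def by blast
    then have "z \<in> Z"
      using R[OF x] by (simp add: Z_def)
    moreover have "x \<in> (+) z ` A z"
      using z x unfolding A_def by (auto simp: image_iff intro!: bexI[of _ "x - z"])
    ultimately show "x \<in> (\<Union>z\<in>Z. (+) z ` A z)"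
      by blast
  qed
  have pointwise: "(\<Sum>z\<in>Z. indicator (A z) y) \<le> real k * indicator C y" for y
  proof (cases "y \<in> C")
    case True
    have "(\<Sum>z\<in>Z. indicator (A z) y :: real) = real (card {z \<in> Z. y + z \<in> Q})"
      using True finZ by (simp add: A_def indicator_def sum.If_cases Int_def)
    also have "card {z \<in> Z. y + z \<in> Q} \<le> card (Q \<inter> (+) y ` integer_lattice)"
      using finZ Qb by (rule card_lattice_translate_hits) (simp add: Z_def)
    finally show ?thesis
      using True count[of y] by simp
  qed (simp add: A_def indicator_def)
  have "measure lebesgue Q \<le> measure lebesgue (\<Union>z\<in>Z. (+) z ` A z)"
    using cover Qm finZ shifted_meas
    by (intro measure_mono_fmeasurable) (auto intro: fmeasurable.finite_UN)
  also have "\<dots> \<le> (\<Sum>z\<in>Z. measure lebesgue ((+) z ` A z))"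
    using finZ shifted_meas by (intro measure_UNION_le) auto
  also have "\<dots> = (\<Sum>z\<in>Z. integral\<^sup>L lebesgue (indicator (A z)))"
    by (simp add: measure_translation)
  also have "\<dots> = integral\<^sup>L lebesgue (\<lambda>y. \<Sum>z\<in>Z. indicator (A z) y)"
    using A_int by (simp add: Bochner_Integration.integral_sum)
  also have "\<dots> \<le> integral\<^sup>L lebesgue (\<lambda>y. real k * indicator C y)"
  proof (rule integral_mono)
    have "C \<in> lmeasurable"
      by (simp add: C_def)
    then show "integrable lebesgue (\<lambda>y. real k * indicator C y :: real)"
      by (auto simp: fmeasurable_def intro!: integrable_real_indicator)
  qed (use A_int pointwise in auto)
  also have "\<dots> = real k"
    by (simp add: C_def measure_unit_cube)
  finally show ?thesis .
qed

(* Counting by differences: if z - z' lies in L whenever sigma z <= sigma z', then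
   subtracting a sigma-maximal element embeds Z injectively into L. *)
lemma card_le_card_of_differences:
  fixes Z :: "'a::ab_group_add set" and \<sigma> :: "'a \<Rightarrow> 'b::linorder"
  assumes "finite Z" "finite L"
    and diff: "\<And>z z'. z \<in> Z \<Longrightarrow> z' \<in> Z \<Longrightarrow> \<sigma> z \<le> \<sigma> z' \<Longrightarrow> z - z' \<in> L"
  shows "card Z \<le> card L"
proof (cases "Z = {}")
  case False
  obtain z0 where z0: "z0 \<in> Z" "\<sigma> z0 = Max (\<sigma> ` Z)"
    using Max_in[of "\<sigma> ` Z"] \<open>finite Z\<close> False by fastforce
  have "(\<lambda>z. z - z0) ` Z \<subseteq> L"
    using diff z0 \<open>finite Z\<close> by auto
  then show ?thesis
    using card_inj_on_le[of "\<lambda>z. z - z0" Z L] \<open>finite L\<close> by (simp add: inj_on_def)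
qed simp

definition std_simplex :: "(real^'n) set" where
  "std_simplex = convex hull (insert 0 Basis)"

definition affine_map :: "real^'n \<Rightarrow> real^'n^'n \<Rightarrow> real^'n \<Rightarrow> real^'n" where
  "affine_map p M s = p + M *v s"

lemma affine_map_image: "affine_map p M ` S = (+) p ` ((*v) M ` S)"
  by (auto simp: affine_map_def image_iff)

lemma Basis_cart_range: "(Basis :: (real^'n) set) = range (\<lambda>j. axis j 1)"
  by (auto simp: Basis_vec_def)

lemma mem_interior_std_simplex:
  fixes u :: "real^'n"
  shows "u \<in> interior std_simplex \<longleftrightarrow> (\<forall>j. 0 < u$j) \<and> (\<Sum>j\<in>UNIV. u$j) < 1"
proof -
  have "(\<Sum>i\<in>Basis. u \<bullet> i) = (\<Sum>j\<in>UNIV. u$j)"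
    unfolding Basis_cart_range by (subst sum.reindex) (auto simp: inj_on_def axis_eq_axis inner_axis)
  then show ?thesis
    unfolding std_simplex_def interior_std_simplex by (auto simp: Basis_cart_range inner_axis)
qed

lemma measure_std_simplex: "measure lebesgue (std_simplex :: (real^'n) set) = 1 / fact CARD('n)"
proof -
  have "compact (std_simplex :: (real^'n) set)"
    unfolding std_simplex_def by (intro finite_imp_compact_convex_hull) auto
  then have "measure lebesgue (std_simplex :: (real^'n) set) = measure lborel (std_simplex :: (real^'n) set)"
    by (intro measure_completion) (auto dest: compact_imp_closed)
  then show ?thesis
    by (simp add: std_simplex_def content_std_simplex)
qed

lemma measure_box_cart:
  fixes b :: "real^'n"
  assumes "\<And>j. 0 < b$j"
  shows "measure lebesgue (box 0 b) = (\<Prod>j\<in>UNIV. b$j)"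
proof -
  have "measure lborel (box 0 b) = measure lborel (cbox 0 b)"
    unfolding measure_def by (simp only: emeasure_lborel_box_eq emeasure_lborel_cbox_eq)
  then have "measure lebesgue (box 0 b) = measure lebesgue (cbox 0 b)"
    by simp
  also have "\<dots> = (\<Prod>j\<in>UNIV. b$j)"
    using assms by (subst measure_cbox_cart) (auto simp: less_imp_le)
  finally show ?thesis .
qed

lemma affine_image_measure_scaling:
  fixes M :: "real^'n^'n"
  obtains c where "\<And>S. S \<in> lmeasurable \<Longrightarrow>
    affine_map p M ` S \<in> lmeasurable \<and> measure lebesgue (affine_map p M ` S) = c * measure lebesgue S"
proof -
  obtain c where "\<forall>S \<in> lmeasurable. (*v) M ` S \<in> lmeasurable \<and> measure lebesgue ((*v) M ` S) = c * measure lebesgue S"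
    using linear_image_measure_scaling[OF matrix_vector_mul_linear] by blast
  then show ?thesis
    by (intro that[of c]) (simp add: affine_map_image measurable_translation measure_translation)
qed

lemma simplex_box_volume_ratio:
  fixes M :: "real^'n^'n" and b :: "real^'n"
  assumes "\<And>j. 0 < b$j"
  shows "measure lebesgue (affine_map p M ` std_simplex) * (fact CARD('n) * (\<Prod>j\<in>UNIV. b$j))
       = measure lebesgue (affine_map p M ` box 0 b)"
proof -
  obtain c where c: "\<And>S. S \<in> lmeasurable \<Longrightarrow>
      affine_map p M ` S \<in> lmeasurable \<and> measure lebesgue (affine_map p M ` S) = c * measure lebesgue S"
    using affine_image_measure_scaling by blast
  have "compact (std_simplex :: (real^'n) set)"
    unfolding std_simplex_def by (intro finite_imp_compact_convex_hull) auto
  then have "measure lebesgue (affine_map p M ` std_simplex) = c / fact CARD('n)"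
    using c[of std_simplex] by (simp add: lmeasurable_compact measure_std_simplex)
  moreover have "measure lebesgue (affine_map p M ` box 0 b) = c * (\<Prod>j\<in>UNIV. b$j)"
    using c[of "box 0 b"] measure_box_cart[of b] assms by (simp add: lmeasurable_open)
  ultimately show ?thesis
    by simp
qed

lemma interior_affine_simplex:
  fixes M :: "real^'n^'n"
  assumes "inj ((*v) M)"
  shows "interior (affine_map p M ` std_simplex) = affine_map p M ` interior std_simplex"
  unfolding affine_map_image interior_translation
  by (simp add: interior_injective_linear_image[OF matrix_vector_mul_linear assms])

(* Key geometric fact: let b be the preimage of the origin, with b > 0 and
   sum b < 1.  For s, s' in the box (0,b) with sum s <= sum s', the point
   b + s - s' lies in the interior of the standard simplex, and it is mapped to
   F s - F s'. *)
lemma box_differences_in_simplex: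
  fixes M :: "real^'n^'n" and b s s' :: "real^'n"
  assumes inj: "inj ((*v) M)"
    and b_sum: "(\<Sum>j\<in>UNIV. b$j) < 1" and centre: "affine_map p M b = 0"
    and s: "s \<in> box 0 b" and s': "s' \<in> box 0 b"
    and le: "(\<Sum>j\<in>UNIV. s$j) \<le> (\<Sum>j\<in>UNIV. s'$j)"
  shows "affine_map p M s - affine_map p M s' \<in> interior (affine_map p M ` std_simplex)"
proof -
  define u where "u = b + s - s'"
  have "\<forall>j. 0 < u$j"
    using s s' by (auto simp: u_def mem_box_cart) (smt (verit))
  moreover have "(\<Sum>j\<in>UNIV. u$j) = (\<Sum>j\<in>UNIV. b$j) + (\<Sum>j\<in>UNIV. s$j) - (\<Sum>j\<in>UNIV. s'$j)"
    by (simp add: u_def sum.distrib sum_subtractf)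
  ultimately have "u \<in> interior std_simplex"
    using b_sum le by (simp add: mem_interior_std_simplex)
  moreover have "affine_map p M u = affine_map p M s - affine_map p M s'"
    using centre
    by (simp add: affine_map_def u_def matrix_vector_right_distrib matrix_vector_mult_diff_distrib algebra_simps)
  ultimately show ?thesis
    using interior_affine_simplex[OF inj] by (metis image_eqI)
qed

(* Therefore, ordering points by the coordinate sum of their preimage, every translate
   of Z^n meets the parallelepiped F (0,b) in at most as many points as the interior
   of the simplex F(simplex) contains, and Blichfeldt's principle bounds its volume. *)
lemma central_box_lattice_bound:
  fixes M :: "real^'n^'n" and b :: "real^'n"
  assumes inj: "inj ((*v) M)"
    and b_sum: "(\<Sum>j\<in>UNIV. b$j) < 1" and centre: "affine_map p M b = 0"
  shows "measure lebesgue (affine_map p M ` box 0 b)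
       \<le> real (card (interior (affine_map p M ` std_simplex) \<inter> integer_lattice))"
proof -
  define F where "F = affine_map p M"
  define L where "L = interior (F ` std_simplex) \<inter> integer_lattice"
  obtain Mi where Mi: "Mi ** M = mat 1"
    using inj matrix_left_invertible_injective by blast
  define \<sigma> where "\<sigma> x = (\<Sum>j\<in>UNIV. (Mi *v x)$j)" for x
  have \<sigma>_F: "\<sigma> (F s) = \<sigma> p + (\<Sum>j\<in>UNIV. s$j)" for s
    using Mi by (simp add: \<sigma>_def F_def affine_map_def matrix_vector_right_distrib
        matrix_vector_mul_assoc sum.distrib)
  have bounded_simplex: "bounded (F ` std_simplex)"
    unfolding F_def affine_map_image std_simplex_def
    by (intro bounded_translation bounded_linear_image finite_imp_bounded_convex_hull
        matrix_vector_mul_bounded_linear) auto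
  have finite_L: "finite L"
    unfolding L_def
    using bounded_simplex bounded_subset interior_subset by (intro finite_lattice_points) blast
  have "F ` box 0 b \<in> lmeasurable"
    using affine_image_measure_scaling[of p M] lmeasurable_open[OF bounded_box open_box]
    unfolding F_def by metis
  moreover have "bounded (F ` box 0 b)"
    unfolding F_def affine_map_image
    by (intro bounded_translation bounded_linear_image bounded_box matrix_vector_mul_bounded_linear)
  moreover have "card (F ` box 0 b \<inter> (+) y ` integer_lattice) \<le> card L" for y
  proof (rule card_le_card_of_differences[where \<sigma> = \<sigma>])
    show "finite (F ` box 0 b \<inter> (+) y ` integer_lattice)"
      using \<open>bounded (F ` box 0 b)\<close> by (rule finite_translated_lattice_points)
    fix z z' assume z: "z \<in> F ` box 0 b \<inter> (+) y ` integer_lattice"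
      and z': "z' \<in> F ` box 0 b \<inter> (+) y ` integer_lattice" and "\<sigma> z \<le> \<sigma> z'"
    obtain s s' where "s \<in> box 0 b" "s' \<in> box 0 b" "z = F s" "z' = F s'"
      using z z' by blast
    moreover from this have "(\<Sum>j\<in>UNIV. s$j) \<le> (\<Sum>j\<in>UNIV. s'$j)"
      using \<open>\<sigma> z \<le> \<sigma> z'\<close> \<sigma>_F by simp
    ultimately have "z - z' \<in> interior (F ` std_simplex)"
      using box_differences_in_simplex[OF inj b_sum centre] by (simp add: F_def)
    moreover have "z - z' \<in> integer_lattice"
      using z z' by (auto intro: integer_lattice_diff)
    ultimately show "z - z' \<in> L"
      by (simp add: L_def)
  qed (fact finite_L)
  ultimately show ?thesis
    unfolding F_def L_def by (rule blichfeldt)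
qed

lemma simplex_volume_lattice_bound:
  fixes M :: "real^'n^'n" and b :: "real^'n"
  assumes b_pos: "\<And>j. 0 < b$j" and b_sum: "(\<Sum>j\<in>UNIV. b$j) < 1"
    and centre: "affine_map p M b = 0"
  shows "measure lebesgue (affine_map p M ` std_simplex) * (fact CARD('n) * (\<Prod>j\<in>UNIV. b$j))
       \<le> real (card (interior (affine_map p M ` std_simplex) \<inter> integer_lattice))"
proof (cases "inj ((*v) M)")
  case True
  then show ?thesis
    using simplex_box_volume_ratio[OF b_pos] central_box_lattice_bound[OF True b_sum centre]
    by simp
next
  case False
  then have "negligible (affine_map p M ` std_simplex)"
    unfolding affine_map_image
    by (intro negligible_translation negligible_linear_singular_image matrix_vector_mul_linear)
  then show ?thesis
    by (simp add: negligible_iff_measure)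
qed

(* The matrix whose columns are the edge vectors rho (g b) - rho 0, where g enumerates
   the vertices rho 1, ..., rho n. *)
definition edge_matrix :: "(nat \<Rightarrow> real^'n) \<Rightarrow> ('n \<Rightarrow> nat) \<Rightarrow> real^'n^'n" where
  "edge_matrix \<rho> g = (\<chi> a b. (\<rho> (g b) - \<rho> 0)$a)"

lemma edge_matrix_mult:
  "edge_matrix \<rho> g *v s = (\<Sum>b\<in>UNIV. s$b *\<^sub>R (\<rho> (g b) - \<rho> 0))"
  by (simp add: edge_matrix_def matrix_vector_mult_def vec_eq_iff sum_component mult.commute)

lemma edge_matrix_axis: "edge_matrix \<rho> g *v axis b 1 = \<rho> (g b) - \<rho> 0"
proof -
  have "edge_matrix \<rho> g *v axis b 1 = (\<Sum>c\<in>UNIV. if c = b then \<rho> (g c) - \<rho> 0 else 0)"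
    unfolding edge_matrix_mult by (intro sum.cong) (auto simp: axis_def)
  then show ?thesis
    by simp
qed

lemma simplex_as_affine_image:
  fixes \<rho> :: "nat \<Rightarrow> real^'n"
  assumes g: "bij_betw g UNIV {1..CARD('n)}"
  shows "convex hull (\<rho> ` {0..CARD('n)}) = affine_map (\<rho> 0) (edge_matrix \<rho> g) ` std_simplex"
proof -
  let ?F = "affine_map (\<rho> 0) (edge_matrix \<rho> g)"
  have "?F ` Basis = \<rho> ` {1..CARD('n)}"
  proof -
    have "?F ` Basis = (\<lambda>b. \<rho> (g b)) ` UNIV"
      unfolding Basis_cart_range image_comp by (simp add: comp_def affine_map_def edge_matrix_axis)
    then show ?thesis
      using g by (metis bij_betw_imp_surj_on image_image)
  qed
  moreover have "{0..CARD('n)} = insert 0 {1..CARD('n)}"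
    by auto
  ultimately have "?F ` insert 0 Basis = \<rho> ` {0..CARD('n)}"
    by (simp add: affine_map_def)
  moreover have "?F ` std_simplex = convex hull (?F ` insert 0 Basis)"
    unfolding std_simplex_def affine_map_image convex_hull_linear_image[OF matrix_vector_mul_linear]
    by (rule convex_hull_translation[symmetric])
  ultimately show ?thesis
    by simp
qed

lemma affine_barycentre:
  fixes \<rho> :: "nat \<Rightarrow> real^'n"
  assumes g: "bij_betw g UNIV {1..CARD('n)}" and weights: "(\<Sum>i=0..CARD('n). c i) = 1"
  shows "affine_map (\<rho> 0) (edge_matrix \<rho> g) (\<chi> b. c (g b)) = (\<Sum>i=0..CARD('n). c i *\<^sub>R \<rho> i)"
proof -
  have "edge_matrix \<rho> g *v (\<chi> b. c (g b)) = (\<Sum>i=1..CARD('n). c i *\<^sub>R (\<rho> i - \<rho> 0))"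
    unfolding edge_matrix_mult using sum.reindex_bij_betw[OF g, of "\<lambda>i. c i *\<^sub>R (\<rho> i - \<rho> 0)"]
    by simp
  also have "\<dots> = (\<Sum>i=1..CARD('n). c i *\<^sub>R \<rho> i) - (\<Sum>i=1..CARD('n). c i) *\<^sub>R \<rho> 0"
    by (simp add: scaleR_diff_right sum_subtractf scaleR_sum_left)
  also have "(\<Sum>i=1..CARD('n). c i) = 1 - c 0"
    using weights by (simp add: sum.atLeast_Suc_atMost)
  finally show ?thesis
    by (simp add: affine_map_def sum.atLeast_Suc_atMost algebra_simps)
qed

lemma normalised_weights:
  fixes g :: "'n \<Rightarrow> nat" and w :: "nat \<Rightarrow> real"
  assumes g: "bij_betw g UNIV {1..CARD('n)}" and pos: "\<And>i. i \<le> CARD('n) \<Longrightarrow> 0 < w i"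
    and h: "h = (\<Sum>i = 0..CARD('n). w i)"
  shows "0 < w (g j) / h"
    and "(\<Sum>j\<in>UNIV. w (g j) / h) < 1"
    and "(\<Prod>j\<in>UNIV. w (g j) / h) = (\<Prod>i = 1..CARD('n). w i) / h ^ CARD('n)"
proof -
  have h_pos: "0 < h"
    unfolding h using pos by (intro sum_pos) auto
  have "g j \<in> {1..CARD('n)}"
    using g bij_betwE by blast
  then show "0 < w (g j) / h"
    using pos[of "g j"] h_pos by simp
  have "(\<Sum>j\<in>UNIV. w (g j) / h) = (\<Sum>i = 1..CARD('n). w i / h)"
    using sum.reindex_bij_betw[OF g, of "\<lambda>i. w i / h"] by simp
  also have "\<dots> = (h - w 0) / h"
    using sum.atLeast_Suc_atMost[of 0 "CARD('n)" w] by (simp add: h flip: sum_divide_distrib)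
  also have "\<dots> = 1 - w 0 / h"
    using h_pos by (simp add: field_simps)
  finally show "(\<Sum>j\<in>UNIV. w (g j) / h) < 1"
    using pos[of 0] h_pos by simp
  show "(\<Prod>j\<in>UNIV. w (g j) / h) = (\<Prod>i = 1..CARD('n). w i) / h ^ CARD('n)"
    using prod.reindex_bij_betw[OF g, of "\<lambda>i. w i / h"] by (simp add: prod_dividef)
qed

theorem mainTheorem5:
  fixes \<rho> :: "nat \<Rightarrow> real ^ 'n" and lam :: "nat \<Rightarrow> int"
  assumes inj: "inj_on \<rho> {0..CARD('n)}"
    and simplex: "\<not> affine_dependent (\<rho> ` {0..CARD('n)})"
    and pos: "\<And>i. i \<le> CARD('n) \<Longrightarrow> lam i > 0"
    and rel: "(\<Sum>i = 0..CARD('n). real_of_int (lam i) *\<^sub>R \<rho> i) = 0"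
  shows "measure lebesgue (convex hull (\<rho> ` {0..CARD('n)}))
     \<le> real (card {x \<in> interior (convex hull (\<rho> ` {0..CARD('n)})). \<forall>j. x $ j \<in> \<int>})
        * real_of_int (\<Sum>i = 0..CARD('n). lam i) ^ CARD('n)
        / (fact CARD('n) * real_of_int (\<Prod>i = 1..CARD('n). lam i))"
proof -
  obtain g :: "'n \<Rightarrow> nat" where g: "bij_betw g UNIV {1..CARD('n)}"
    using finite_same_card_bij[of "UNIV :: 'n set" "{1..CARD('n)}"] by auto
  define w where "w i = real_of_int (lam i)" for i
  define h where "h = (\<Sum>i = 0..CARD('n). w i)"
  define b :: "real^'n" where "b = (\<chi> j. w (g j) / h)"
  have w_pos: "\<And>i. i \<le> CARD('n) \<Longrightarrow> 0 < w i"
    using pos by (simp add: w_def)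
  note weights = normalised_weights[OF g w_pos h_def]
  have "0 < h"
    unfolding h_def using w_pos by (intro sum_pos) auto
  then have "affine_map (\<rho> 0) (edge_matrix \<rho> g) b = (\<Sum>i = 0..CARD('n). (w i / h) *\<^sub>R \<rho> i)"
    using affine_barycentre[OF g, of "\<lambda>i. w i / h" \<rho>] by (simp add: b_def h_def flip: sum_divide_distrib)
  also have "\<dots> = (1 / h) *\<^sub>R (\<Sum>i = 0..CARD('n). w i *\<^sub>R \<rho> i)"
    by (simp add: scaleR_sum_right)
  finally have centre: "affine_map (\<rho> 0) (edge_matrix \<rho> g) b = 0"
    using rel by (simp add: w_def)
  have "measure lebesgue (affine_map (\<rho> 0) (edge_matrix \<rho> g) ` std_simplex)
      * (fact CARD('n) * ((\<Prod>i = 1..CARD('n). w i) / h ^ CARD('n)))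
    \<le> real (card (interior (affine_map (\<rho> 0) (edge_matrix \<rho> g) ` std_simplex) \<inter> integer_lattice))"
    using simplex_volume_lattice_bound[OF _ _ centre] weights by (simp add: b_def)
  moreover have "0 < (\<Prod>i = 1..CARD('n). w i)"
    using w_pos by (intro prod_pos) auto
  ultimately show ?thesis
    using \<open>0 < h\<close>
    by (simp add: simplex_as_affine_image[OF g] integer_lattice_def h_def w_def field_simps Int_def)
qed

end
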